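(* For each $k\in\mathbb N$ there exists $C'_k\in[0,\infty)$ such that $\mathbb E(M_n^k)\le C'_k n^{-k}$ for all $n\in\mathbb N$.
   Context: Kakutani's interval-splitting process: let $U_1,U_2,\dots$ be i.i.d. uniform random variables on $[0,1]$. At time $0$ the partition of $[0,1]$ consists of the single interval $[0,1]$. Given the partition at time $n\in\mathbb Z_+$ (which consists of $n+1$ intervals, whose lengths are a.s. distinct), let $[a,b]$ be the interval of maximal length; the partition at time $n+1$ is obtained by replacing $[a,b]$ by the two intervals $[a,a+U_{n+1}(b-a)]$ and $[a+U_{n+1}(b-a),b]$. $M_n$ is the maximal interval length at time $n$. *)

theory Defs
  imports "HOL-Probability.Probability"
begin

text \<open>A partition of [0,1] is represented as a list of intervals (a,b).
  split_first m x P replaces the first interval of length m in P by its two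
  pieces [a, a + x(b-a)] and [a + x(b-a), b].\<close>

fun split_first :: "real \<Rightarrow> real \<Rightarrow> (real \<times> real) list \<Rightarrow> (real \<times> real) list" where
  "split_first m x [] = []"
| "split_first m x ((a,b) # P) =
     (if b - a = m then (a, a + x * (b - a)) # (a + x * (b - a), b) # P
      else (a, b) # split_first m x P)"

definition max_len :: "(real \<times> real) list \<Rightarrow> real" where
  "max_len P = Max (set (map (\<lambda>(a,b). b - a) P))"

text \<open>Kakutani partition at time n driven by the sequence u (u (Suc n) = U_{n+1}).\<close>
fun kakutani_part :: "(nat \<Rightarrow> real) \<Rightarrow> nat \<Rightarrow> (real \<times> real) list" where
  "kakutani_part u 0 = [(0, 1)]"
| "kakutani_part u (Suc n) =
     split_first (max_len (kakutani_part u n)) (u (Suc n)) (kakutani_part u n)"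

definition kakutani_max :: "(nat \<Rightarrow> real) \<Rightarrow> nat \<Rightarrow> real" where
  "kakutani_max u n = max_len (kakutani_part u n)"

end

theory Submission
  imports Defs
begin

text \<open>Let \<open>\<Phi>\<^sub>n\<close> be the sum of the square roots of the interval lengths at time \<open>n\<close>.
  Splitting the longest interval (of length \<open>M\<^sub>n\<close>) at relative position \<open>U\<close> raises \<open>\<Phi>\<close> by
  \<open>sqrt M\<^sub>n \<cdot> D(U)\<close> with \<open>D(v) = sqrt v + sqrt (1 - v) - 1 \<ge> 0\<close>, while Cauchy--Schwarz gives
  \<open>\<Phi>\<^sub>n \<le> sqrt (n + 1)\<close>. As long as all maxima stay above \<open>\<tau>\<close> and \<open>\<lambda> sqrt \<tau> \<ge> 6\<close>, each step
  multiplies \<open>exp (-\<lambda> \<Phi>)\<close> by at most \<open>exp (-6 D(U))\<close>, whose expectation is at most \<open>2/3\<close> for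
  uniform \<open>U\<close>; by independence, \<open>E [exp (-\<lambda> \<Phi>\<^sub>N); M\<^sub>m > \<tau> for m < N] \<le> (2/3)\<^sup>N\<close>. With
  \<open>\<tau> = 3600/(n + 2)\<close> and \<open>\<lambda> = sqrt (n + 2) / 10\<close> this yields \<open>P(M\<^sub>n > \<tau>) \<le> exp (-n/5)\<close>, hence
  \<open>E M\<^sub>n\<^sup>k \<le> \<tau>\<^sup>k + exp (-n/5) = O(n\<^sup>-\<^sup>k)\<close>.\<close>

definition interval_len :: "real \<times> real \<Rightarrow> real" where
  "interval_len p = snd p - fst p"

lemma max_len_eq_Max: "max_len P = Max (interval_len ` set P)"
  unfolding max_len_def interval_len_def by (simp add: split_beta cong: image_cong)

lemma max_len_in: "P \<noteq> [] \<Longrightarrow> max_len P \<in> interval_len ` set P"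
  unfolding max_len_eq_Max by (intro Max_in) auto

lemma interval_len_le_max_len: "p \<in> set P \<Longrightarrow> interval_len p \<le> max_len P"
  unfolding max_len_eq_Max by (intro Max_ge) auto

lemma length_split_first:
  "m \<in> interval_len ` set P \<Longrightarrow> length (split_first m x P) = Suc (length P)"
  by (induction m x P rule: split_first.induct) (auto simp: interval_len_def)

lemma sum_list_split_first:
  fixes h :: "real \<Rightarrow> real"
  assumes "m \<in> interval_len ` set P"
  shows "(\<Sum>p\<leftarrow>split_first m x P. h (interval_len p))
           = (\<Sum>p\<leftarrow>P. h (interval_len p)) - h m + h (x * m) + h (m - x * m)"
  using assms
proof (induction m x P rule: split_first.induct)
  case (2 m x a b P)
  show ?case
  proof (cases "b - a = m")
    case True
    then have "interval_len (a, a + x * (b - a)) = x * m"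
      and "interval_len (a + x * (b - a), b) = m - x * m"
      and "interval_len (a, b) = m"
      by (auto simp: interval_len_def algebra_simps)
    with True show ?thesis by simp
  next
    case False
    with "2" show ?thesis by (auto simp: interval_len_def)
  qed
qed simp

lemma split_first_lengths_bounded:
  assumes "\<forall>p\<in>set P. 0 \<le> interval_len p \<and> interval_len p \<le> m" and x: "0 \<le> x" "x \<le> 1"
  shows "\<forall>p\<in>set (split_first m x P). 0 \<le> interval_len p \<and> interval_len p \<le> m"
  using assms(1)
proof (induction P)
  case (Cons q P)
  obtain a b where q: "q = (a, b)" by fastforce
  have ab: "0 \<le> b - a" "b - a \<le> m" and P: "\<forall>p\<in>set P. 0 \<le> interval_len p \<and> interval_len p \<le> m"
    using Cons.prems by (simp_all add: q interval_len_def)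
  show ?case
  proof (cases "b - a = m")
    case True
    have "0 \<le> x * (b - a)" "x * (b - a) \<le> b - a"
      using x ab mult_right_mono[OF x(2)] by simp_all
    with True ab P show ?thesis by (simp add: q interval_len_def)
  next
    case False
    with Cons.IH[OF P] ab show ?thesis by (simp add: q interval_len_def)
  qed
qed simp

lemma length_kakutani_part: "length (kakutani_part u n) = Suc n"
proof (induction n)
  case (Suc n)
  then have "max_len (kakutani_part u n) \<in> interval_len ` set (kakutani_part u n)"
    by (intro max_len_in) auto
  with Suc show ?case by (simp add: length_split_first)
qed simp

lemma kakutani_part_cong:
  "(\<And>j. j \<in> {1..n} \<Longrightarrow> u j = v j) \<Longrightarrow> kakutani_part u n = kakutani_part v n"
  by (induction n) auto

lemma max_len_kakutani_part_in: "max_len (kakutani_part u n) \<in> interval_len ` set (kakutani_part u n)"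
  by (rule max_len_in) (simp flip: length_0_conv add: length_kakutani_part)

lemma sum_interval_len_kakutani_part: "(\<Sum>p\<leftarrow>kakutani_part u n. interval_len p) = 1"
proof (induction n)
  case (Suc n)
  then show ?case using sum_list_split_first[OF max_len_kakutani_part_in, of id] by simp
qed (simp add: interval_len_def)

context
  fixes u :: "nat \<Rightarrow> real"
  assumes u01: "\<And>j. 0 \<le> u j \<and> u j \<le> 1"
begin

lemma interval_len_kakutani_part_nonneg: "p \<in> set (kakutani_part u n) \<Longrightarrow> 0 \<le> interval_len p"
proof (induction n arbitrary: p)
  case (Suc n)
  have "\<forall>p\<in>set (kakutani_part u n). 0 \<le> interval_len p \<and> interval_len p \<le> max_len (kakutani_part u n)"
    using Suc.IH interval_len_le_max_len by blast
  from split_first_lengths_bounded[OF this] Suc.prems u01 show ?case by auto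
qed (simp add: interval_len_def)

lemma kakutani_max_Suc_le: "kakutani_max u (Suc n) \<le> kakutani_max u n"
proof -
  let ?P = "kakutani_part u n" and ?Q = "kakutani_part u (Suc n)"
  have "\<forall>p\<in>set ?P. 0 \<le> interval_len p \<and> interval_len p \<le> max_len ?P"
    using interval_len_kakutani_part_nonneg interval_len_le_max_len by blast
  from split_first_lengths_bounded[OF this, of "u (Suc n)"] u01[of "Suc n"]
  have "\<forall>p\<in>set ?Q. interval_len p \<le> max_len ?P" by auto
  with max_len_kakutani_part_in[of u "Suc n"] show ?thesis
    unfolding kakutani_max_def by force
qed

lemma decseq_kakutani_max: "decseq (kakutani_max u)"
  by (rule decseq_SucI) (rule kakutani_max_Suc_le)

lemma kakutani_max_nonneg: "0 \<le> kakutani_max u n"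
  using max_len_kakutani_part_in[of u n] interval_len_kakutani_part_nonneg
  unfolding kakutani_max_def by force

lemma kakutani_max_le_1: "kakutani_max u n \<le> 1"
  using decseq_kakutani_max[THEN decseqD, of 0 n]
  by (simp add: kakutani_max_def max_len_def)

end

section \<open>The square-root potential\<close>

definition sqrt_potential :: "(nat \<Rightarrow> real) \<Rightarrow> nat \<Rightarrow> real" where
  "sqrt_potential u n = (\<Sum>p\<leftarrow>kakutani_part u n. sqrt (interval_len p))"

definition sqrt_gain :: "real \<Rightarrow> real" where
  "sqrt_gain v = sqrt v + sqrt (1 - v) - 1"

lemma sqrt_potential_0 [simp]: "sqrt_potential u 0 = 1"
  by (simp add: sqrt_potential_def interval_len_def)

lemma sqrt_potential_Suc:
  "sqrt_potential u (Suc n) = sqrt_potential u n + sqrt (kakutani_max u n) * sqrt_gain (u (Suc n))"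
proof -
  let ?m = "kakutani_max u n" and ?x = "u (Suc n)"
  have "sqrt_potential u (Suc n) = sqrt_potential u n - sqrt ?m + sqrt (?x * ?m) + sqrt (?m - ?x * ?m)"
    unfolding sqrt_potential_def kakutani_max_def
    using sum_list_split_first[OF max_len_kakutani_part_in, of sqrt u n ?x] by simp
  moreover have "sqrt (?m - ?x * ?m) = sqrt (1 - ?x) * sqrt ?m"
    by (simp add: left_diff_distrib flip: real_sqrt_mult)
  ultimately show ?thesis by (simp add: real_sqrt_mult sqrt_gain_def algebra_simps)
qed

context
  fixes u :: "nat \<Rightarrow> real"
  assumes u01: "\<And>j. 0 \<le> u j \<and> u j \<le> 1"
begin

lemma sqrt_potential_nonneg: "0 \<le> sqrt_potential u n"
  unfolding sqrt_potential_def
  using interval_len_kakutani_part_nonneg[of u, OF u01] by (intro sum_list_nonneg) auto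

lemma sqrt_potential_le: "sqrt_potential u n \<le> sqrt (Suc n)"
proof -
  define c where "c = sqrt (Suc n)"
  have c: "0 < c" "c * c = Suc n" by (simp_all add: c_def)
  have "sqrt (interval_len p) \<le> (c * interval_len p + 1 / c) / 2" if "p \<in> set (kakutani_part u n)" for p
    using arith_geo_mean_sqrt[of "c * interval_len p" "1 / c"] c
      interval_len_kakutani_part_nonneg[of u, OF u01 that] by simp
  then have "sqrt_potential u n \<le> (\<Sum>p\<leftarrow>kakutani_part u n. c / 2 * interval_len p + 1 / (2 * c))"
    unfolding sqrt_potential_def by (intro sum_list_mono) (simp add: field_simps)
  also have "\<dots> = c / 2 * (\<Sum>p\<leftarrow>kakutani_part u n. interval_len p) + Suc n * (1 / (2 * c))"
    by (subst sum_list_addf, subst sum_list_const_mult, subst sum_list_triv)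
      (simp add: length_kakutani_part)
  also have "\<dots> = c"
    using c by (simp add: sum_interval_len_kakutani_part field_simps)
  finally show ?thesis by (simp add: c_def)
qed

end

lemma measurable_sqrt_gain [measurable]: "sqrt_gain \<in> borel_measurable borel"
  unfolding sqrt_gain_def by measurable

lemma sqrt_gain_nonneg:
  assumes "0 \<le> v" "v \<le> 1"
  shows "0 \<le> sqrt_gain v"
proof -
  have "y \<le> sqrt y" if "0 \<le> y" "y \<le> 1" for y :: real
    using that real_sqrt_le_iff[of "y * y" y] by (simp add: mult_left_le_one_le)
  from this[of v] this[of "1 - v"] assms show ?thesis by (simp add: sqrt_gain_def)
qed

lemma sqrt_ge_chord:
  assumes "1/4 \<le> y" "y \<le> 1"
  shows "1/3 + 2/3 * y \<le> sqrt y"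
proof -
  define r where "r = sqrt y"
  have "1/2 \<le> r" "r \<le> 1"
    using assms real_sqrt_le_mono[of "1/4" y] by (simp_all add: r_def real_sqrt_divide)
  then have "0 \<le> (2 * r - 1) * (1 - r)" by simp
  moreover have "y = r * r" using assms by (simp add: r_def)
  ultimately show ?thesis by (simp add: r_def [symmetric] algebra_simps)
qed

lemma sqrt_gain_ge_one_third:
  assumes "1/4 \<le> v" "v \<le> 3/4"
  shows "1/3 \<le> sqrt_gain v"
proof -
  have "1/3 + 2/3 * v \<le> sqrt v" "1/3 + 2/3 * (1 - v) \<le> sqrt (1 - v)"
    using assms by (intro sqrt_ge_chord; simp)+
  then show ?thesis unfolding sqrt_gain_def by argo
qed

lemma exp_neg_sqrt_gain_le:
  assumes "0 \<le> v" "v \<le> 1"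
  shows "exp (- 6 * sqrt_gain v) \<le> 1 - 2/3 * indicator {1/4..3/4} v"
proof (cases "v \<in> {1/4..3/4}")
  case True
  have "exp (- 6 * sqrt_gain v) \<le> exp (-2)"
    using True sqrt_gain_ge_one_third[of v] by simp
  also have "\<dots> \<le> 1/3"
    using exp_ge_add_one_self[of 2] by (simp add: exp_minus field_simps)
  finally show ?thesis using True by simp
next
  case False
  then show ?thesis using sqrt_gain_nonneg[OF assms] by simp
qed

section \<open>Measurability\<close>

text \<open>Measurability of a random partition is expressed entrywise, through the endpoints of its
  \<open>i\<close>-th interval, rather than via a measurable space of lists.\<close>
definition interval_list_measurable :: "'b measure \<Rightarrow> ('b \<Rightarrow> (real \<times> real) list) \<Rightarrow> bool" where
  "interval_list_measurable N P \<longleftrightarrow>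
     (\<forall>i. (\<lambda>\<omega>. fst (P \<omega> ! i)) \<in> borel_measurable N \<and> (\<lambda>\<omega>. snd (P \<omega> ! i)) \<in> borel_measurable N)"

lemma interval_list_measurable_split_first:
  assumes "interval_list_measurable N P" and "\<And>\<omega>. length (P \<omega>) = L"
    and [measurable]: "m \<in> borel_measurable N" "x \<in> borel_measurable N"
  shows "interval_list_measurable N (\<lambda>\<omega>. split_first (m \<omega>) (x \<omega>) (P \<omega>))"
  using assms(1,2)
proof (induction L arbitrary: P)
  case 0
  then show ?case by (simp add: interval_list_measurable_def)
next
  case (Suc L)
  define a where "a \<omega> = fst (hd (P \<omega>))" for \<omega>
  define b where "b \<omega> = snd (hd (P \<omega>))" for \<omega>
  define T where "T \<omega> = tl (P \<omega>)" for \<omega>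
  have P: "P \<omega> = (a \<omega>, b \<omega>) # T \<omega>" for \<omega>
    using Suc.prems(2)[of \<omega>] unfolding a_def b_def T_def by (cases "P \<omega>") auto
  have "T \<omega> ! i = P \<omega> ! Suc i" for \<omega> i by (simp add: P)
  then have "interval_list_measurable N T"
    using Suc.prems(1) unfolding interval_list_measurable_def by simp
  moreover have "length (T \<omega>) = L" for \<omega> using Suc.prems(2)[of \<omega>] by (simp add: T_def)
  ultimately have IH: "interval_list_measurable N (\<lambda>\<omega>. split_first (m \<omega>) (x \<omega>) (T \<omega>))"
    by (rule Suc.IH)
  have [measurable]: "(\<lambda>\<omega>. fst (T \<omega> ! i)) \<in> borel_measurable N" "(\<lambda>\<omega>. snd (T \<omega> ! i)) \<in> borel_measurable N"
    "(\<lambda>\<omega>. fst (split_first (m \<omega>) (x \<omega>) (T \<omega>) ! i)) \<in> borel_measurable N"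
    "(\<lambda>\<omega>. snd (split_first (m \<omega>) (x \<omega>) (T \<omega>) ! i)) \<in> borel_measurable N"
    "a \<in> borel_measurable N" "b \<in> borel_measurable N" for i
    using IH \<open>interval_list_measurable N T\<close> Suc.prems(1)
    unfolding interval_list_measurable_def a_def b_def
    by (auto simp: hd_conv_nth[OF length_greater_0_conv[THEN iffD1]] Suc.prems(2))
  let ?c = "\<lambda>\<omega>. b \<omega> - a \<omega> = m \<omega>" and ?s = "\<lambda>\<omega>. a \<omega> + x \<omega> * (b \<omega> - a \<omega>)"
  have "(\<lambda>\<omega>. fst (split_first (m \<omega>) (x \<omega>) (P \<omega>) ! i)) \<in> borel_measurable N \<and>
        (\<lambda>\<omega>. snd (split_first (m \<omega>) (x \<omega>) (P \<omega>) ! i)) \<in> borel_measurable N" for i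
  proof (cases i)
    case 0
    have "(\<lambda>\<omega>. split_first (m \<omega>) (x \<omega>) (P \<omega>) ! i) =
      (\<lambda>\<omega>. (a \<omega>, if ?c \<omega> then ?s \<omega> else b \<omega>))"
      by (simp add: P 0 fun_eq_iff)
    then show ?thesis by (simp add: fun_eq_iff)
  next
    case (Suc j)
    show ?thesis
    proof (cases j)
      case 0
      have "(\<lambda>\<omega>. split_first (m \<omega>) (x \<omega>) (P \<omega>) ! i) = (\<lambda>\<omega>.
        (if ?c \<omega> then ?s \<omega> else fst (split_first (m \<omega>) (x \<omega>) (T \<omega>) ! 0),
         if ?c \<omega> then b \<omega> else snd (split_first (m \<omega>) (x \<omega>) (T \<omega>) ! 0)))"
        by (simp add: P Suc 0 fun_eq_iff)
      then show ?thesis by (simp add: fun_eq_iff)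
    next
      case (Suc k)
      have "(\<lambda>\<omega>. split_first (m \<omega>) (x \<omega>) (P \<omega>) ! i) = (\<lambda>\<omega>.
        (if ?c \<omega> then fst (T \<omega> ! k) else fst (split_first (m \<omega>) (x \<omega>) (T \<omega>) ! j),
         if ?c \<omega> then snd (T \<omega> ! k) else snd (split_first (m \<omega>) (x \<omega>) (T \<omega>) ! j)))"
        by (simp add: P \<open>i = Suc j\<close> Suc fun_eq_iff)
      then show ?thesis by (simp add: fun_eq_iff)
    qed
  qed
  then show ?case unfolding interval_list_measurable_def by blast
qed

lemma interval_len_set_conv_nth: "interval_len ` set xs = (\<lambda>i. interval_len (xs ! i)) ` {..<length xs}"
  by (metis image_image nth_image order_refl take_all atLeast0LessThan)

lemma interval_len_nth_measurable:
  assumes "interval_list_measurable N P"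
  shows "(\<lambda>\<omega>. interval_len (P \<omega> ! i)) \<in> borel_measurable N"
proof -
  have [measurable]: "(\<lambda>\<omega>. fst (P \<omega> ! i)) \<in> borel_measurable N" "(\<lambda>\<omega>. snd (P \<omega> ! i)) \<in> borel_measurable N"
    using assms unfolding interval_list_measurable_def by auto
  show ?thesis unfolding interval_len_def by measurable
qed

lemma measurable_max_len:
  assumes "interval_list_measurable N P" and "\<And>\<omega>. length (P \<omega>) = L"
  shows "(\<lambda>\<omega>. max_len (P \<omega>)) \<in> borel_measurable N"
  using interval_len_nth_measurable[OF assms(1)]
  unfolding max_len_eq_Max interval_len_set_conv_nth assms(2) by measurable

lemma measurable_sum_list_interval_len:
  fixes h :: "real \<Rightarrow> real"
  assumes "interval_list_measurable N P" and "\<And>\<omega>. length (P \<omega>) = L"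
    and [measurable]: "h \<in> borel_measurable borel"
  shows "(\<lambda>\<omega>. \<Sum>p\<leftarrow>P \<omega>. h (interval_len p)) \<in> borel_measurable N"
proof -
  note interval_len_nth_measurable[OF assms(1), measurable]
  have "(\<Sum>p\<leftarrow>P \<omega>. h (interval_len p)) = (\<Sum>i<L. h (interval_len (P \<omega> ! i)))" for \<omega>
    by (simp add: sum_list_sum_nth assms(2) atLeast0LessThan)
  then show ?thesis by simp
qed

lemma interval_list_measurable_kakutani_part:
  assumes "\<And>j. j \<in> {1..n} \<Longrightarrow> (\<lambda>\<omega>. u \<omega> j) \<in> borel_measurable N"
  shows "interval_list_measurable N (\<lambda>\<omega>. kakutani_part (u \<omega>) n)"
  using assms
proof (induction n)
  case 0
  then show ?case by (simp add: interval_list_measurable_def)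
next
  case (Suc n)
  then have "interval_list_measurable N (\<lambda>\<omega>. kakutani_part (u \<omega>) n)" by simp
  with Suc.prems show ?case
    by (auto intro!: interval_list_measurable_split_first measurable_max_len
             simp: length_kakutani_part)
qed

context
  fixes u :: "'b \<Rightarrow> nat \<Rightarrow> real" and N :: "'b measure" and n :: nat
  assumes u: "\<And>j. j \<in> {1..n} \<Longrightarrow> (\<lambda>\<omega>. u \<omega> j) \<in> borel_measurable N"
begin

lemma measurable_kakutani_max: "(\<lambda>\<omega>. kakutani_max (u \<omega>) n) \<in> borel_measurable N"
  unfolding kakutani_max_def
  by (rule measurable_max_len[OF interval_list_measurable_kakutani_part[OF u] length_kakutani_part])

lemma measurable_sqrt_potential: "(\<lambda>\<omega>. sqrt_potential (u \<omega>) n) \<in> borel_measurable N"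
  unfolding sqrt_potential_def
  by (rule measurable_sum_list_interval_len[OF interval_list_measurable_kakutani_part[OF u] length_kakutani_part])
    (auto intro: borel_measurable_continuous_onI continuous_on_real_sqrt)

end

section \<open>The exponential bound\<close>

definition survival_weight :: "real \<Rightarrow> real \<Rightarrow> nat \<Rightarrow> (nat \<Rightarrow> real) \<Rightarrow> real" where
  "survival_weight lam tau N u =
     (if \<forall>m<N. tau < kakutani_max u m then exp (- lam * sqrt_potential u N) else 0)"

lemma survival_weight_cong:
  assumes "\<And>j. j \<in> {1..N} \<Longrightarrow> u j = v j"
  shows "survival_weight lam tau N u = survival_weight lam tau N v"
proof -
  have "kakutani_part u m = kakutani_part v m" if "m \<le> N" for m
    using assms that by (intro kakutani_part_cong) auto
  then show ?thesis
    by (simp add: survival_weight_def sqrt_potential_def kakutani_max_def)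
qed

lemma survival_weight_nonneg: "0 \<le> survival_weight lam tau N u"
  by (simp add: survival_weight_def)

lemma survival_weight_le_1:
  assumes "\<And>j. 0 \<le> u j \<and> u j \<le> 1" and "0 \<le> lam"
  shows "survival_weight lam tau N u \<le> 1"
  using sqrt_potential_nonneg[of u N, OF assms(1)] assms(2) by (simp add: survival_weight_def)

lemma survival_weight_Suc_le:
  assumes u01: "\<And>j. 0 \<le> u j \<and> u j \<le> 1" and lam: "0 \<le> lam" "6 \<le> lam * sqrt tau"
  shows "survival_weight lam tau (Suc N) u
           \<le> survival_weight lam tau N u * exp (- 6 * sqrt_gain (u (Suc N)))"
proof (cases "\<forall>m<Suc N. tau < kakutani_max u m")
  case True
  let ?g = "sqrt_gain (u (Suc N))"
  have "6 \<le> lam * sqrt (kakutani_max u N)"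
    using True lam by (meson lessI mult_left_mono order_less_imp_le order_trans real_sqrt_le_mono)
  moreover have "0 \<le> ?g" using u01 by (intro sqrt_gain_nonneg) auto
  ultimately have "6 * ?g \<le> lam * sqrt (kakutani_max u N) * ?g" by (intro mult_right_mono)
  then have "exp (- lam * sqrt_potential u (Suc N)) \<le> exp (- lam * sqrt_potential u N) * exp (- 6 * ?g)"
    by (simp add: sqrt_potential_Suc algebra_simps flip: exp_add)
  with True show ?thesis by (simp add: survival_weight_def)
next
  case False
  then have "survival_weight lam tau (Suc N) u = 0" by (simp add: survival_weight_def)
  then show ?thesis by (simp add: survival_weight_nonneg)
qed

lemma measurable_survival_weight:
  assumes "\<And>j. j \<in> {1..N} \<Longrightarrow> (\<lambda>\<omega>. u \<omega> j) \<in> borel_measurable M"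
  shows "(\<lambda>\<omega>. survival_weight lam tau N (u \<omega>)) \<in> borel_measurable M"
proof -
  have [measurable]: "(\<lambda>\<omega>. kakutani_max (u \<omega>) m) \<in> borel_measurable M" if "m < N" for m
    using assms that by (intro measurable_kakutani_max) auto
  have [measurable]: "(\<lambda>\<omega>. sqrt_potential (u \<omega>) N) \<in> borel_measurable M"
    using assms by (rule measurable_sqrt_potential)
  show ?thesis unfolding survival_weight_def by measurable
qed

lemma kakutani_max_power_le:
  assumes u01: "\<And>j. 0 \<le> u j \<and> u j \<le> 1" and "0 \<le> lam" "0 \<le> tau"
  shows "kakutani_max u n ^ k
           \<le> tau ^ k + survival_weight lam tau (Suc n) u * exp (lam * sqrt (real n + 2))"
proof (cases "kakutani_max u n \<le> tau")
  case True
  then have "kakutani_max u n ^ k \<le> tau ^ k"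
    by (intro power_mono kakutani_max_nonneg[of u, OF u01])
  then show ?thesis
    by (simp add: add_increasing2 survival_weight_nonneg)
next
  case False
  have "tau < kakutani_max u m" if "m < Suc n" for m
    using False decseqD[OF decseq_kakutani_max[of u], of m n] u01 that by auto
  then have "survival_weight lam tau (Suc n) u = exp (- lam * sqrt_potential u (Suc n))"
    by (simp add: survival_weight_def)
  moreover have "sqrt_potential u (Suc n) \<le> sqrt (real n + 2)"
    using sqrt_potential_le[of u "Suc n", OF u01] by (simp add: add.commute)
  ultimately have "1 \<le> survival_weight lam tau (Suc n) u * exp (lam * sqrt (real n + 2))"
    using \<open>0 \<le> lam\<close> by (simp add: mult_left_mono flip: exp_add)
  moreover have "kakutani_max u n ^ k \<le> 1"
    using kakutani_max_nonneg[of u, OF u01] kakutani_max_le_1[of u, OF u01] by (rule power_le_one)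
  moreover have "0 \<le> tau ^ k" using \<open>0 \<le> tau\<close> by simp
  ultimately show ?thesis by linarith
qed

lemma two_thirds_power_exp_le: "(2/3) ^ Suc n * exp ((real n + 2) / 10) \<le> exp (- real n / 5)"
proof -
  have "exp (1/3 :: real) \<le> 1 + 1/3 + (1/3)^2" by (rule exp_bound) auto
  then have "2/3 \<le> exp (- (1/3 :: real))" by (simp add: exp_minus field_simps)
  then have "(2/3) ^ Suc n \<le> exp (- (1/3 :: real)) ^ Suc n" by (rule power_mono) simp
  also have "\<dots> = exp (real (Suc n) * (- (1/3)))" by (rule exp_of_nat_mult[symmetric])
  finally have "(2/3) ^ Suc n * exp ((real n + 2) / 10)
                  \<le> exp (real (Suc n) * (- (1/3))) * exp ((real n + 2) / 10)"
    by (rule mult_right_mono) simp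
  also have "\<dots> \<le> exp (- real n / 5)" by (simp add: field_simps flip: exp_add)
  finally show ?thesis .
qed

lemma power_le_exp:
  fixes x :: real
  assumes "0 \<le> x"
  shows "x ^ k \<le> real k ^ k * exp x"
proof (cases "k = 0")
  case False
  have "x ^ k = real k ^ k * (x / k) ^ k"
    using False by (simp add: power_divide)
  also have "\<dots> \<le> real k ^ k * (1 + x / k) ^ k"
    using assms by (intro mult_left_mono power_mono) auto
  also have "\<dots> \<le> real k ^ k * exp x"
    using assms False by (intro mult_left_mono exp_ge_one_plus_x_over_n_power_n) auto
  finally show ?thesis .
qed (use assms in simp)

lemma exp_neg_le_power_divide:
  fixes x :: real
  assumes "0 < x"
  shows "exp (- x) \<le> real k ^ k / x ^ k"
  using power_le_exp[of x k] assms by (simp add: exp_minus field_simps)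

context prob_space
begin

lemma integrable_survival_weight:
  assumes "\<And>i. i \<in> {1..N} \<Longrightarrow> V i \<in> borel_measurable M"
    and "\<And>i \<omega>. 0 \<le> V i \<omega> \<and> V i \<omega> \<le> 1" and "0 \<le> lam"
  shows "integrable M (\<lambda>\<omega>. survival_weight lam tau N (\<lambda>i. V i \<omega>))"
  using assms survival_weight_nonneg survival_weight_le_1
  by (intro integrable_const_bound[where B = 1] measurable_survival_weight) auto

lemma indep_vars_measurable: "indep_vars M' X I \<Longrightarrow> i \<in> I \<Longrightarrow> X i \<in> measurable M (M' i)"
  by (auto simp: indep_vars_def)

context
  fixes V :: "nat \<Rightarrow> 'a \<Rightarrow> real"
  assumes indep: "indep_vars (\<lambda>_. borel) V {1..}"
    and V01: "\<And>i \<omega>. 0 \<le> V i \<omega> \<and> V i \<omega> \<le> 1"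
    and gain: "\<And>i. i \<ge> 1 \<Longrightarrow> expectation (\<lambda>\<omega>. exp (- 6 * sqrt_gain (V i \<omega>))) \<le> 2/3"
begin

lemma expectation_survival_weight_le:
  assumes lam: "0 \<le> lam" "6 \<le> lam * sqrt tau"
  shows "expectation (\<lambda>\<omega>. survival_weight lam tau N (\<lambda>i. V i \<omega>)) \<le> (2/3) ^ N"
proof (induction N)
  case 0
  show ?case by (simp add: survival_weight_def prob_space lam)
next
  case (Suc N)
  note indep_vars_measurable[OF indep, measurable]
  let ?W = "\<lambda>\<omega>. survival_weight lam tau N (\<lambda>i. V i \<omega>)"
  let ?G = "\<lambda>\<omega>. exp (- 6 * sqrt_gain (V (Suc N) \<omega>))"
  have "indep_var (PiM {1..N} (\<lambda>_. borel)) (\<lambda>\<omega>. restrict (\<lambda>i. V i \<omega>) {1..N})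
                  (PiM {Suc N} (\<lambda>_. borel)) (\<lambda>\<omega>. restrict (\<lambda>i. V i \<omega>) {Suc N})"
    by (rule indep_var_restrict[OF indep]) auto
  moreover have "survival_weight lam tau N \<in> borel_measurable (PiM {1..N} (\<lambda>_. borel))"
    by (rule measurable_survival_weight[where u = "\<lambda>x. x"]) simp
  moreover have "(\<lambda>x. exp (- 6 * sqrt_gain (x (Suc N)))) \<in> borel_measurable (PiM {Suc N} (\<lambda>_. borel))"
    by measurable
  ultimately have "indep_var borel (survival_weight lam tau N \<circ> (\<lambda>\<omega>. restrict (\<lambda>i. V i \<omega>) {1..N}))
     borel ((\<lambda>x. exp (- 6 * sqrt_gain (x (Suc N)))) \<circ> (\<lambda>\<omega>. restrict (\<lambda>i. V i \<omega>) {Suc N}))"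
    by (rule indep_var_compose)
  moreover have "survival_weight lam tau N \<circ> (\<lambda>\<omega>. restrict (\<lambda>i. V i \<omega>) {1..N}) = ?W"
    by (auto simp: fun_eq_iff intro!: survival_weight_cong)
  ultimately have indep_WG: "indep_var borel ?W borel ?G"
    by (simp add: comp_def)
  have int_W: "integrable M (\<lambda>\<omega>. survival_weight lam tau K (\<lambda>i. V i \<omega>))" for K
    using V01 lam by (intro integrable_survival_weight) auto
  have "0 \<le> sqrt_gain (V (Suc N) \<omega>)" for \<omega>
    using V01 by (intro sqrt_gain_nonneg) auto
  then have int_G: "integrable M ?G"
    by (intro integrable_const_bound[where B = 1]) auto
  have "expectation (\<lambda>\<omega>. survival_weight lam tau (Suc N) (\<lambda>i. V i \<omega>))
          \<le> expectation (\<lambda>\<omega>. ?W \<omega> * ?G \<omega>)"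
    using V01 lam
    by (intro integral_mono int_W indep_var_integrable[OF indep_WG int_W int_G] survival_weight_Suc_le)
  also have "\<dots> = expectation ?W * expectation ?G"
    by (rule indep_var_lebesgue_integral[OF indep_WG int_W int_G])
  also have "\<dots> \<le> (2/3) ^ N * (2/3)"
    using Suc.IH gain[of "Suc N"]
    by (intro mult_mono integral_nonneg) (auto simp: survival_weight_nonneg)
  finally show ?case by simp
qed

lemma expectation_kakutani_max_power_le:
  "expectation (\<lambda>\<omega>. kakutani_max (\<lambda>i. V i \<omega>) n ^ k)
     \<le> (3600 / (real n + 2)) ^ k + exp (- real n / 5)"
proof -
  note indep_vars_measurable[OF indep, measurable]
  define q where "q = sqrt (real n + 2)"
  define tau where "tau = 3600 / (real n + 2)"
  define lam where "lam = q / 10"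
  have q: "0 < q" "q * q = real n + 2" by (auto simp: q_def)
  have lam: "0 \<le> lam" "6 \<le> lam * sqrt tau"
    using q by (auto simp: lam_def tau_def q_def real_sqrt_divide)
  have tau: "0 \<le> tau" by (simp add: tau_def)
  let ?W = "\<lambda>\<omega>. survival_weight lam tau (Suc n) (\<lambda>i. V i \<omega>)"
  have int_W: "integrable M ?W"
    using V01 lam by (intro integrable_survival_weight) auto
  have int_M: "integrable M (\<lambda>\<omega>. kakutani_max (\<lambda>i. V i \<omega>) n ^ k)"
    using V01 kakutani_max_nonneg kakutani_max_le_1
    by (intro integrable_const_bound[where B = 1] borel_measurable_power measurable_kakutani_max)
      (auto simp: power_le_one)
  have "expectation (\<lambda>\<omega>. kakutani_max (\<lambda>i. V i \<omega>) n ^ k)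
          \<le> expectation (\<lambda>\<omega>. tau ^ k + ?W \<omega> * exp (lam * q))"
    using V01 lam tau unfolding q_def
    by (intro integral_mono int_M kakutani_max_power_le Bochner_Integration.integrable_add
        integrable_mult_left int_W) auto
  also have "\<dots> = tau ^ k + expectation ?W * exp (lam * q)"
    using int_W by (simp add: prob_space)
  also have "\<dots> \<le> tau ^ k + (2/3) ^ Suc n * exp (lam * q)"
    using expectation_survival_weight_le[OF lam, where N = "Suc n"] by (intro add_left_mono mult_right_mono) auto
  also have "(2/3::real) ^ Suc n * exp (lam * q) \<le> exp (- real n / 5)"
    using two_thirds_power_exp_le[of n] q by (simp add: lam_def)
  finally show ?thesis by (simp add: tau_def)
qed

end

end

section \<open>Uniform splitting variables\<close>

definition unit_clamp :: "real \<Rightarrow> real" where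
  "unit_clamp x = max 0 (min 1 x)"

lemma measurable_unit_clamp [measurable]: "unit_clamp \<in> borel_measurable borel"
  unfolding unit_clamp_def by measurable

context prob_space
begin

context
  fixes X :: "'a \<Rightarrow> real"
  assumes unif: "distributed M lborel X (indicator {0..1})"
begin

lemma measurable_unit_uniform [measurable]: "X \<in> borel_measurable M"
  using distributed_measurable[OF unif] by simp

lemma emeasure_unit_uniform:
  assumes "A \<in> sets borel"
  shows "emeasure M (X -` A \<inter> space M) = emeasure lborel (A \<inter> {0..1})"
proof -
  have "emeasure M (X -` A \<inter> space M) = (\<integral>\<^sup>+x. indicator {0..1} x * indicator A x \<partial>lborel)"
    using assms by (intro distributed_emeasure[OF unif]) simp
  also have "\<dots> = emeasure lborel (A \<inter> {0..1})"
    using assms by (simp add: indicator_inter_arith[symmetric] Int_commute)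
  finally show ?thesis .
qed

lemma AE_unit_uniform: "AE \<omega> in M. X \<omega> \<in> {0..1}"
  by (subst distributed_AE2[OF unif]) (auto split: split_indicator)

lemma expectation_exp_neg_sqrt_gain_le:
  "expectation (\<lambda>\<omega>. exp (- 6 * sqrt_gain (unit_clamp (X \<omega>)))) \<le> 2/3"
proof -
  define S where "S = X -` {1/4..3/4} \<inter> space M"
  have S [measurable]: "S \<in> sets M" unfolding S_def by measurable
  have "emeasure M S = ennreal (1/2)"
    unfolding S_def by (simp add: emeasure_unit_uniform)
  then have "ennreal (prob S) = ennreal (1/2)" by (simp only: emeasure_eq_measure)
  then have prob_S: "prob S = 1/2" by (subst (asm) ennreal_inj) auto
  have "exp (- 6 * sqrt_gain (unit_clamp (X \<omega>))) \<le> 1 - 2/3 * indicator S \<omega>" if "\<omega> \<in> space M" for \<omega>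
  proof -
    have "indicator {1/4..3/4} (unit_clamp (X \<omega>)) = (indicator S \<omega> :: real)"
      using that by (auto simp: S_def unit_clamp_def split: split_indicator)
    then show ?thesis
      using exp_neg_sqrt_gain_le[of "unit_clamp (X \<omega>)"] by (simp add: unit_clamp_def)
  qed
  then have "expectation (\<lambda>\<omega>. exp (- 6 * sqrt_gain (unit_clamp (X \<omega>))))
               \<le> expectation (\<lambda>\<omega>. 1 - 2/3 * indicator S \<omega>)"
    using sqrt_gain_nonneg[of "unit_clamp _"]
    by (intro integral_mono integrable_const_bound[where B = 1])
      (auto simp: unit_clamp_def split: split_indicator)
  also have "\<dots> = 1 - 2/3 * prob S"
  proof -
    have "integrable M (\<lambda>\<omega>. 2/3 * indicator S \<omega> :: real)"
      using S by (intro integrable_mult_right integrable_real_indicator) (auto simp: less_top[symmetric])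
    with S show ?thesis
      by (subst Bochner_Integration.integral_diff[OF integrable_const]) (auto simp: prob_space)
  qed
  finally show ?thesis using prob_S by simp
qed

end

lemma expectation_kakutani_max_power_unit_uniform:
  fixes U :: "nat \<Rightarrow> 'a \<Rightarrow> real"
  assumes indep: "indep_vars (\<lambda>_. borel) U {1..}"
    and unif: "\<And>i. i \<ge> 1 \<Longrightarrow> distributed M lborel (U i) (indicator {0..1})"
  shows "expectation (\<lambda>\<omega>. kakutani_max (\<lambda>i. U i \<omega>) n ^ k)
           \<le> (3600 / (real n + 2)) ^ k + exp (- real n / 5)"
proof -
  \<comment> \<open>\<open>U i\<close> lies in \<open>[0,1]\<close> only almost surely; clamping makes this hold pointwise
    without changing \<open>M\<^sub>n\<close> almost surely.\<close>
  define V where "V i \<omega> = unit_clamp (U i \<omega>)" for i \<omega>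
  have U [measurable]: "U i \<in> borel_measurable M" if "i \<ge> 1" for i
    using measurable_unit_uniform[OF unif[OF that]] .
  have "indep_vars (\<lambda>_. borel) V {1..}"
    unfolding V_def by (rule indep_vars_compose2[OF indep]) simp
  moreover have V01: "0 \<le> V i \<omega> \<and> V i \<omega> \<le> 1" for i \<omega>
    by (simp add: V_def unit_clamp_def)
  moreover have "expectation (\<lambda>\<omega>. exp (- 6 * sqrt_gain (V i \<omega>))) \<le> 2/3" if "i \<ge> 1" for i
    unfolding V_def by (rule expectation_exp_neg_sqrt_gain_le[OF unif[OF that]])
  ultimately have bound: "expectation (\<lambda>\<omega>. kakutani_max (\<lambda>i. V i \<omega>) n ^ k)
                            \<le> (3600 / (real n + 2)) ^ k + exp (- real n / 5)"
    by (rule expectation_kakutani_max_power_le)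
  have "AE \<omega> in M. \<forall>j\<in>{1..n}. U j \<omega> \<in> {0..1}"
    using unif AE_unit_uniform by (subst AE_finite_all) auto
  then have "AE \<omega> in M. kakutani_max (\<lambda>i. U i \<omega>) n ^ k = kakutani_max (\<lambda>i. V i \<omega>) n ^ k"
  proof eventually_elim
    case (elim \<omega>)
    then have "kakutani_part (\<lambda>i. U i \<omega>) n = kakutani_part (\<lambda>i. V i \<omega>) n"
      by (intro kakutani_part_cong) (auto simp: V_def unit_clamp_def)
    then show ?case by (simp add: kakutani_max_def)
  qed
  then have "expectation (\<lambda>\<omega>. kakutani_max (\<lambda>i. U i \<omega>) n ^ k)
               = expectation (\<lambda>\<omega>. kakutani_max (\<lambda>i. V i \<omega>) n ^ k)"
    by (intro integral_cong_AE borel_measurable_power measurable_kakutani_max)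
      (auto simp: V_def)
  with bound show ?thesis by simp
qed

end

theorem lemma2p3:
  fixes M :: "'a measure" and U :: "nat \<Rightarrow> 'a \<Rightarrow> real"
  assumes "prob_space M"
    and "prob_space.indep_vars M (\<lambda>_. borel) U {1..}"
    and "\<And>i. i \<ge> 1 \<Longrightarrow> distributed M lborel (U i) (indicator {0..1::real})"
  shows "\<forall>k::nat. \<exists>C::real. C \<ge> 0 \<and>
           (\<forall>n::nat. n \<ge> 1 \<longrightarrow>
              (\<integral>\<omega>. (kakutani_max (\<lambda>i. U i \<omega>) n) ^ k \<partial>M) \<le> C / (real n) ^ k)"
proof
  fix k :: nat
  interpret prob_space M by fact
  define C where "C = 3600 ^ k + real k ^ k * 5 ^ k"
  have "expectation (\<lambda>\<omega>. kakutani_max (\<lambda>i. U i \<omega>) n ^ k) \<le> C / real n ^ k" if "n \<ge> 1" for n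
  proof -
    have "(3600 / (real n + 2)) ^ k \<le> 3600 ^ k / real n ^ k"
      using that by (simp add: power_divide [symmetric] power_mono frac_le)
    moreover have "exp (- real n / 5) \<le> real k ^ k * 5 ^ k / real n ^ k"
      using exp_neg_le_power_divide[of "real n / 5" k] that by (simp add: power_divide)
    ultimately show ?thesis
      using expectation_kakutani_max_power_unit_uniform[OF assms(2,3), of n k]
      by (simp add: C_def add_divide_distrib)
  qed
  then show "\<exists>C\<ge>0. \<forall>n\<ge>1. expectation (\<lambda>\<omega>. kakutani_max (\<lambda>i. U i \<omega>) n ^ k) \<le> C / real n ^ k"
    by (intro exI[of _ C]) (simp add: C_def)
qed

end
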